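(* Fix any total budget $\mathrm{TB}\in\mathbb N_0$ and game forms $G,H$. Suppose $G$ has an inverse $G'$, i.e. $G+G'=0$. Then $G+H=G$ implies $H=0$.
   Context: Game forms are defined recursively: $G=\{G^{\mathcal L}\mid G^{\mathcal R}\}$ with finite sets of Left and Right options, and finite birthday. $0=\{\varnothing\mid\varnothing\}$. The budget set for total budget $\mathrm{TB}$ is $\mathcal B=\{0,\dots,\mathrm{TB},\hat 0,\dots,\widehat{\mathrm{TB}}\}$: state $p$ (resp. $\hat p$) means Left holds $p$ dollars and Right holds $\mathrm{TB}-p$, and Right (resp. Left) holds the tie-breaking marker. Play of $(G,\tilde p)$: at every position (terminal ones included) both players bid simultaneously, Left $\ell\in\{0,\dots,p\}$, Right $r\in\{0,\dots,\mathrm{TB}-p\}$. If Left holds the marker (state $\hat p$): if $\ell>r$ Left moves to $(G^L,\widehat{p-\ell})$, or, including the marker (allowed when $\ell\ge r$), to $(G^L,p-\ell)$; if $\ell=r$ Left wins, the marker passes to Right, play continues at $(G^L,p-\ell)$; if $\ell<r$ Right moves to $(G^R,\widehat{p+r})$. Symmetrically when Right holds the marker (state $p$): if $r>\ell$ Right moves to $(G^R,p+r)$ or, including the marker, to $(G^R,\widehat{p+r})$; if $r=\ell$ Right wins, the marker passes to Left, play continues at $(G^R,\widehat{p+r})$; if $r<\ell$ Left moves to $(G^L,p-\ell)$. A player who wins a bid but has no option loses. $o(G,\tilde p)\in\{\mathrm L,\mathrm R\}$ is the winner under optimal play; $\mathrm L>\mathrm R$. Disjunctive sum $G+H=\{G^{\mathcal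 L}+H,G+H^{\mathcal L}\mid G^{\mathcal R}+H,G+H^{\mathcal R}\}$. $G\ge H$ means $o(G+X,\tilde p)\ge o(H+X,\tilde p)$ for all game forms $X$ and all $\tilde p\in\mathcal B$; $G=H$ means $G\ge H$ and $H\ge G$. *)

theory Defs
  imports Main "HOL-Library.FSet"
begin

text \<open>Game forms: finite sets of Left and Right options (finite birthday by well-foundedness).\<close>
datatype game = Game (lopts: "game fset") (ropts: "game fset")

definition zero_game :: game where
  "zero_game = Game {||} {||}"

lemma size_lopt: "x |\<in>| L \<Longrightarrow> size x < size (Game L R)"
proof -
  assume "x |\<in>| L"
  hence "Suc (size x) \<le> (\<Sum>y\<in>fset L. Suc (size y))"
    by (intro member_le_sum[where f = "\<lambda>y. Suc (size y)", simplified]) auto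
  thus ?thesis by simp
qed

lemma size_ropt: "x |\<in>| R \<Longrightarrow> size x < size (Game L R)"
proof -
  assume "x |\<in>| R"
  hence "Suc (size x) \<le> (\<Sum>y\<in>fset R. Suc (size y))"
    by (intro member_le_sum[where f = "\<lambda>y. Suc (size y)", simplified]) auto
  thus ?thesis by simp
qed

function gplus :: "game \<Rightarrow> game \<Rightarrow> game" where
  "gplus (Game GL GR) (Game HL HR) =
     Game ((\<lambda>X. gplus X (Game HL HR)) |`| GL |\<union>| (\<lambda>Y. gplus (Game GL GR) Y) |`| HL)
          ((\<lambda>X. gplus X (Game HL HR)) |`| GR |\<union>| (\<lambda>Y. gplus (Game GL GR) Y) |`| HR)"
  by pat_completeness auto
termination
  by (relation "measure (\<lambda>(G, H). size G + size H)")
     (auto dest: size_lopt[of _ _ GR for GR] size_ropt[of _ _ GL for GL])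

text \<open>
  Left wins (under optimal play) the game G from budget state (p, m), where
  Left holds p dollars, Right holds TB - p, and m = True means Left holds the
  tie-breaking marker (state \<open>p\<close> with a hat), m = False means Right holds it.  A player who wins the bid but has
  no option loses.\<close>
primrec lwins :: "nat \<Rightarrow> game \<Rightarrow> nat \<Rightarrow> bool \<Rightarrow> bool" where
  "lwins TB (Game Ls Rs) = (\<lambda>p m.
     (let WL = lwins TB |`| Ls; WR = lwins TB |`| Rs in
      \<exists>l\<le>p. \<forall>r\<le>TB - p.
        (if m then
           (if r < l then (\<exists>w |\<in>| WL. w (p - l) True \<or> w (p - l) False)
            else if l = r then (\<exists>w |\<in>| WL. w (p - l) False)
            else (\<forall>w |\<in>| WR. w (p + r) True))
         else
           (if l < r then (\<forall>w |\<in>| WR. w (p + r) False \<and> w (p + r) True)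
            else if l = r then (\<forall>w |\<in>| WR. w (p + r) True)
            else (\<exists>w |\<in>| WL. w (p - l) False)))))"

text \<open>Outcome: True = L, False = R; with the order L > R this is the order on bool.\<close>
definition outcome :: "nat \<Rightarrow> game \<Rightarrow> nat \<Rightarrow> bool \<Rightarrow> bool" where
  "outcome TB G p m = lwins TB G p m"

definition game_ge :: "nat \<Rightarrow> game \<Rightarrow> game \<Rightarrow> bool" where
  "game_ge TB G H \<longleftrightarrow>
     (\<forall>X p m. p \<le> TB \<longrightarrow> (outcome TB (gplus H X) p m \<longrightarrow> outcome TB (gplus G X) p m))"

definition game_eq :: "nat \<Rightarrow> game \<Rightarrow> game \<Rightarrow> bool" where
  "game_eq TB G H \<longleftrightarrow> game_ge TB G H \<and> game_ge TB H G"

end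

theory Submission
  imports Defs
begin

text \<open>
  Disjunctive sum is associative and commutative with neutral element 0, and the
  order \<open>\<ge>\<close> is a preorder compatible with sums: comparing \<open>G + K\<close> with \<open>H + K\<close>
  in a context \<open>X\<close> is comparing \<open>G\<close> with \<open>H\<close> in the context \<open>K + X\<close>.  Hence
  \<open>H = 0 + H = (G + G') + H = (G + H) + G' = G + G' = 0\<close>, the equalities being
  identities of sums or instances of the two hypotheses.
\<close>

lemma lopts_gplus: "lopts (gplus G H) = (\<lambda>X. gplus X H) |`| lopts G |\<union>| gplus G |`| lopts H"
  by (cases G; cases H) simp

lemma ropts_gplus: "ropts (gplus G H) = (\<lambda>X. gplus X H) |`| ropts G |\<union>| gplus G |`| ropts H"
  by (cases G; cases H) simp

lemma gplus_zero_left: "gplus zero_game G = G"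
  unfolding zero_game_def by (induction G) (auto simp: fset.map_cong_simp)

lemma gplus_comm: "gplus G H = gplus H G"
  by (induction G H rule: gplus.induct) (auto simp: funion_commute cong: fset.map_cong_simp)

lemma gplus_assoc: "gplus (gplus A B) C = gplus A (gplus B C)"
proof (induction A arbitrary: B C)
  case (Game AL AR)
  note IH_A = Game.IH
  show ?case
  proof (induction B arbitrary: C)
    case (Game BL BR)
    note IH_B = Game.IH
    show ?case
    proof (induction C)
      case (Game CL CR)
      show ?case
        using IH_A IH_B Game.IH
        by (intro game.expand conjI)
           (simp_all del: gplus.simps add: lopts_gplus ropts_gplus fimage_funion funion_assoc
              fimage_fimage cong: fset.map_cong_simp)
    qed
  qed
qed

lemma gplus_right_commute: "gplus (gplus A B) C = gplus (gplus A C) B"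
  by (simp only: gplus_assoc gplus_comm[of B C])

lemma game_ge_trans: "game_ge TB G H \<Longrightarrow> game_ge TB H K \<Longrightarrow> game_ge TB G K"
  unfolding game_ge_def by blast

lemma game_ge_gplus_right:
  assumes "game_ge TB G H"
  shows "game_ge TB (gplus G K) (gplus H K)"
  unfolding game_ge_def gplus_assoc
proof (intro allI impI)
  fix X p m
  assume "p \<le> TB" and "outcome TB (gplus H (gplus K X)) p m"
  then show "outcome TB (gplus G (gplus K X)) p m"
    using assms unfolding game_ge_def by blast
qed

lemma game_eq_sym: "game_eq TB G H \<Longrightarrow> game_eq TB H G"
  unfolding game_eq_def by blast

lemma game_eq_trans [trans]: "game_eq TB G H \<Longrightarrow> game_eq TB H K \<Longrightarrow> game_eq TB G K"
  unfolding game_eq_def by (blast intro: game_ge_trans)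

lemma game_eq_gplus_right: "game_eq TB G H \<Longrightarrow> game_eq TB (gplus G K) (gplus H K)"
  unfolding game_eq_def by (simp add: game_ge_gplus_right)

theorem mainTheorem10:
  fixes TB :: nat and G H G' :: game
  assumes "game_eq TB (gplus G G') zero_game"
    and "game_eq TB (gplus G H) G"
  shows "game_eq TB H zero_game"
proof -
  have "H = gplus zero_game H"
    by (simp only: gplus_zero_left)
  also have "game_eq TB \<dots> (gplus (gplus G G') H)"
    using assms(1) by (rule game_eq_gplus_right[OF game_eq_sym])
  also have "gplus (gplus G G') H = gplus (gplus G H) G'"
    by (rule gplus_right_commute)
  also have "game_eq TB \<dots> (gplus G G')"
    using assms(2) by (rule game_eq_gplus_right)
  also have "game_eq TB \<dots> zero_game"
    by (rule assms(1))
  finally show ?thesis .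
qed

end
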